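(* Let $n\ge1$ and $u,v\in V_n$. There exists a valid rectangular pattern of tiles in $\mathcal T'_n$ whose sequence of bottom labels is $\tau_n(v)$ and whose sequence of left labels is $\tau_n(u)$ if and only if $$(u,v)\in (V_n\setminus Z_n\times V_n\setminus Z_n)\cup(M_n\cap Z_n\times M_n\cap Z_n)\cup(M_n\setminus Z_n\times Z_n)\cup(Z_n\times M_n\setminus Z_n).$$
   Context: Write $\bar m=m+1$. $V_n=\{(v_0,v_1,v_2)\in\mathbb{Z}^3: 0\le v_0\le v_1\le 1,\ v_1\le v_2\le n+1\}$, elements written as words $v_0v_1v_2$. $Z_n=\{v_0v_1v_2\in V_n: v_0=0\}$, $M_n=\{v_0v_1v_2\in V_n:v_2\ge n\}$. A Wang tile is $t=(a,b,c,d)$ with $\mathrm{RIGHT}(t)=a$, $\mathrm{TOP}(t)=b$, $\mathrm{LEFT}(t)=c$, $\mathrm{BOTTOM}(t)=d$; $\hat t=(b,a,d,c)$, $\hat S=\{\hat t:t\in S\}$. Define (as (right, top, left, bottom)): $W_n=\{(11(i+1),11(j+1),11i,11j):1\le i,j\le n\}$; $B'_n=\{(00(i+1),111,00i,11n):0\le i\le n\}$; $G_n=\{(01(i+1),111,00i,11(n+1)):0\le i\le n\}$; $Y_n=\{(01(i+1),112,01i,11(n+1)):1\le i\le n\}$; $A_n=\{(00(i+1),112,01i,11n):1\le i\le n\}$; $J'_n=\{((0,k,l),(0,r,s),(0,s,r+n),(0,l,k+n)):(k,l),(r,s)\in\{(0,0),(0,1),(1,1)\}\}$. $\mathcal T'_n=W_n\cup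 B'_n\cup G_n\cup Y_n\cup A_n\cup\hat B'_n\cup\hat G_n\cup\hat Y_n\cup\hat A_n\cup J'_n$. A rectangular pattern is valid if adjacent tiles agree on their common edge; its bottom labels are the bottom labels of its bottom row read left to right, its left labels the left labels of its left column read bottom to top. $\tau_n:V_n\to V_n^*$ is $\tau_n(xyz)=(0,x-y+1,n)\cdot(11n)^{z-x-1}\cdot(11\bar n)^{n+1-z}$ if $x\ne z$, and $\tau_n(xyz)=(0,x-y+1,n+1)\cdot(11\bar n)^{n-z}$ if $x=z$ (concatenation of sequences; exponents denote repetition). *)

theory Defs
  imports Main
begin

type_synonym label = "int \<times> int \<times> int"
type_synonym tile = "label \<times> label \<times> label \<times> label"

definition RIGHT :: "tile \<Rightarrow> label" where "RIGHT t = fst t"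
definition TOP :: "tile \<Rightarrow> label" where "TOP t = fst (snd t)"
definition LEFT :: "tile \<Rightarrow> label" where "LEFT t = fst (snd (snd t))"
definition BOTTOM :: "tile \<Rightarrow> label" where "BOTTOM t = snd (snd (snd t))"

definition hat :: "tile \<Rightarrow> tile" where
  "hat t = (TOP t, RIGHT t, BOTTOM t, LEFT t)"

definition Vn :: "nat \<Rightarrow> label set" where
  "Vn n = {(v0, v1, v2). 0 \<le> v0 \<and> v0 \<le> v1 \<and> v1 \<le> 1 \<and> v1 \<le> v2 \<and> v2 \<le> int n + 1}"

definition Zn :: "nat \<Rightarrow> label set" where
  "Zn n = {v \<in> Vn n. fst v = 0}"

definition Mn :: "nat \<Rightarrow> label set" where
  "Mn n = {v \<in> Vn n. snd (snd v) \<ge> int n}"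

definition Wn :: "nat \<Rightarrow> tile set" where
  "Wn n = {((1,1,i+1), (1,1,j+1), (1,1,i), (1,1,j)) | i j. 1 \<le> i \<and> i \<le> int n \<and> 1 \<le> j \<and> j \<le> int n}"

definition Bn' :: "nat \<Rightarrow> tile set" where
  "Bn' n = {((0,0,i+1), (1,1,1), (0,0,i), (1,1,int n)) | i. 0 \<le> i \<and> i \<le> int n}"

definition Gn :: "nat \<Rightarrow> tile set" where
  "Gn n = {((0,1,i+1), (1,1,1), (0,0,i), (1,1,int n + 1)) | i. 0 \<le> i \<and> i \<le> int n}"

definition Yn :: "nat \<Rightarrow> tile set" where
  "Yn n = {((0,1,i+1), (1,1,2), (0,1,i), (1,1,int n + 1)) | i. 1 \<le> i \<and> i \<le> int n}"

definition An :: "nat \<Rightarrow> tile set" where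
  "An n = {((0,0,i+1), (1,1,2), (0,1,i), (1,1,int n)) | i. 1 \<le> i \<and> i \<le> int n}"

definition Jn' :: "nat \<Rightarrow> tile set" where
  "Jn' n = {((0,k,l), (0,r,s), (0,s,r + int n), (0,l,k + int n)) | k l r s.
              (k,l) \<in> {(0,0),(0,1),(1,1)} \<and> (r,s) \<in> {(0,0),(0,1),(1,1)}}"

definition Tn' :: "nat \<Rightarrow> tile set" where
  "Tn' n = Wn n \<union> Bn' n \<union> Gn n \<union> Yn n \<union> An n
          \<union> hat ` Bn' n \<union> hat ` Gn n \<union> hat ` Yn n \<union> hat ` An n \<union> Jn' n"

text \<open>A rectangular pattern of width w and height h: P i j is the tile in column i
  (from the left, i < w) and row j (from the bottom, j < h).\<close>

definition valid_pattern :: "tile set \<Rightarrow> nat \<Rightarrow> nat \<Rightarrow> (nat \<Rightarrow> nat \<Rightarrow> tile) \<Rightarrow> bool" where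
  "valid_pattern T w h P \<longleftrightarrow>
     (\<forall>i<w. \<forall>j<h. P i j \<in> T) \<and>
     (\<forall>i j. Suc i < w \<and> j < h \<longrightarrow> RIGHT (P i j) = LEFT (P (Suc i) j)) \<and>
     (\<forall>i j. i < w \<and> Suc j < h \<longrightarrow> TOP (P i j) = BOTTOM (P i (Suc j)))"

definition bottom_labels :: "nat \<Rightarrow> (nat \<Rightarrow> nat \<Rightarrow> tile) \<Rightarrow> label list" where
  "bottom_labels w P = map (\<lambda>i. BOTTOM (P i 0)) [0..<w]"

definition left_labels :: "nat \<Rightarrow> (nat \<Rightarrow> nat \<Rightarrow> tile) \<Rightarrow> label list" where
  "left_labels h P = map (\<lambda>j. LEFT (P 0 j)) [0..<h]"

definition tau :: "nat \<Rightarrow> label \<Rightarrow> label list" where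
  "tau n v = (case v of (x, y, z) \<Rightarrow>
     if x \<noteq> z then
       [(0, x - y + 1, int n)] @ replicate (nat (z - x - 1)) (1, 1, int n)
         @ replicate (nat (int n + 1 - z)) (1, 1, int n + 1)
     else [(0, x - y + 1, int n + 1)] @ replicate (nat (int n - z)) (1, 1, int n + 1))"

end

theory Submission
  imports Defs
begin

text \<open>Call a label white if its first component is 1. All labels of \<open>\<tau>\<^sub>n(v)\<close> but the first
  are white, and whiteness propagates upwards and rightwards through tiles of \<open>\<T>'\<^sub>n\<close>, so every
  tile off the bottom row and the left column is a W tile: it raises the third component by one
  in each step up or right and keeps it at most \<open>n\<close>. Suppose \<open>u \<in> Z\<^sub>n\<close>, so that the pattern has
  \<open>n + 1\<close> rows, and \<open>v \<notin> M\<^sub>n\<close>. Then the bottom label at position \<open>n - v\<^sub>0 - 1\<close> has third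
  component \<open>n + 1\<close>, so the tile there has a right label \<open>01\<cdot>\<close>, the tile to its right has top
  label \<open>112\<close>, and the W tiles above it climb to \<open>n + 1\<close> in the top row, which is impossible.
  Transposing patterns by \<open>t \<mapsto> \<hat>t\<close> gives the case \<open>v \<in> Z\<^sub>n\<close>. Conversely, if neither
  obstruction occurs, an explicit pattern works: a \<open>J'\<close> corner, \<open>B'\<close>, \<open>G\<close> and \<open>Y\<close> tiles along
  the bottom row, their hats along the left column, and W tiles inside.\<close>

lemmas tile_defs = Tn'_def Wn_def Bn'_def Gn_def Yn_def An_def Jn'_def hat_def
  RIGHT_def TOP_def LEFT_def BOTTOM_def

lemma hat_hat [simp]: "hat (hat t) = t"
  by (cases t) (simp add: hat_def RIGHT_def TOP_def LEFT_def BOTTOM_def)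

lemma hat_in_Tn': "t \<in> Tn' n \<Longrightarrow> hat t \<in> Tn' n"
proof -
  assume "t \<in> Tn' n"
  then consider "t \<in> Wn n \<union> Jn' n" | "t \<in> Bn' n \<union> Gn n \<union> Yn n \<union> An n"
    | "hat t \<in> Bn' n \<union> Gn n \<union> Yn n \<union> An n"
    unfolding Tn'_def by auto
  then show ?thesis
    by cases (auto simp: tile_defs)
qed

lemma Tn'_fst_TOP: "t \<in> Tn' n \<Longrightarrow> fst (BOTTOM t) = 1 \<Longrightarrow> fst (TOP t) = 1"
  by (auto simp: tile_defs)

lemma Tn'_white_tile_climbs:
  "t \<in> Tn' n \<Longrightarrow> fst (LEFT t) = 1 \<Longrightarrow> fst (BOTTOM t) = 1 \<Longrightarrow>
    snd (snd (TOP t)) = snd (snd (BOTTOM t)) + 1 \<and> snd (snd (BOTTOM t)) \<le> int n"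
  by (auto simp: tile_defs)

lemma Tn'_RIGHT_if_BOTTOM_level_Suc_n:
  "t \<in> Tn' n \<Longrightarrow> snd (snd (BOTTOM t)) = int n + 1 \<Longrightarrow> fst (RIGHT t) = 0 \<and> fst (snd (RIGHT t)) = 1"
  by (auto simp: tile_defs)

lemma Tn'_TOP_level_2:
  "t \<in> Tn' n \<Longrightarrow> fst (BOTTOM t) = 1 \<Longrightarrow> fst (LEFT t) = 0 \<Longrightarrow> fst (snd (LEFT t)) = 1 \<Longrightarrow>
    snd (snd (TOP t)) = 2"
  by (auto simp: tile_defs)

lemma valid_patternD:
  assumes "valid_pattern T w h P"
  shows "i < w \<Longrightarrow> j < h \<Longrightarrow> P i j \<in> T"
    and "Suc i < w \<Longrightarrow> j < h \<Longrightarrow> RIGHT (P i j) = LEFT (P (Suc i) j)"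
    and "i < w \<Longrightarrow> Suc j < h \<Longrightarrow> TOP (P i j) = BOTTOM (P i (Suc j))"
  using assms unfolding valid_pattern_def by simp_all

lemma length_bottom_labels [simp]: "length (bottom_labels w P) = w"
  by (simp add: bottom_labels_def)

lemma nth_bottom_labels [simp]: "i < w \<Longrightarrow> bottom_labels w P ! i = BOTTOM (P i 0)"
  by (simp add: bottom_labels_def)

lemma length_left_labels [simp]: "length (left_labels h P) = h"
  by (simp add: left_labels_def)

lemma nth_left_labels [simp]: "j < h \<Longrightarrow> left_labels h P ! j = LEFT (P 0 j)"
  by (simp add: left_labels_def)

definition pattern_transpose :: "(nat \<Rightarrow> nat \<Rightarrow> tile) \<Rightarrow> nat \<Rightarrow> nat \<Rightarrow> tile" where
  "pattern_transpose P i j = hat (P j i)"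

lemma valid_pattern_transpose:
  assumes "\<And>t. t \<in> T \<Longrightarrow> hat t \<in> T" and "valid_pattern T w h P"
  shows "valid_pattern T h w (pattern_transpose P)"
  using assms unfolding valid_pattern_def pattern_transpose_def
  by (auto simp: hat_def RIGHT_def TOP_def LEFT_def BOTTOM_def)

lemma bottom_labels_transpose: "bottom_labels h (pattern_transpose P) = left_labels h P"
  by (simp add: bottom_labels_def left_labels_def pattern_transpose_def hat_def BOTTOM_def LEFT_def)

lemma left_labels_transpose: "left_labels w (pattern_transpose P) = bottom_labels w P"
  by (simp add: bottom_labels_def left_labels_def pattern_transpose_def hat_def BOTTOM_def LEFT_def)

lemma pattern_exists_transpose:
  assumes "\<exists>w h P. valid_pattern (Tn' n) w h P \<and> bottom_labels w P = a \<and> left_labels h P = b"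
  shows "\<exists>w h P. valid_pattern (Tn' n) w h P \<and> bottom_labels w P = b \<and> left_labels h P = a"
  using assms valid_pattern_transpose[OF hat_in_Tn'] bottom_labels_transpose left_labels_transpose
  by metis

definition tau_high :: "label \<Rightarrow> nat \<Rightarrow> int" where
  "tau_high v i = (if fst v + int i \<ge> snd (snd v) then 1 else 0)"

lemma length_tau: "n \<ge> 1 \<Longrightarrow> (x, y, z) \<in> Vn n \<Longrightarrow> length (tau n (x, y, z)) = nat (int n + 1 - x)"
  unfolding Vn_def tau_def by (auto simp: nat_diff_distrib)

lemma tau_nth_0: "(x, y, z) \<in> Vn n \<Longrightarrow> tau n (x, y, z) ! 0 = (0, x - y + 1, int n + tau_high (x, y, z) 0)"
  unfolding Vn_def tau_def tau_high_def by auto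

lemma tau_nth:
  "(x, y, z) \<in> Vn n \<Longrightarrow> 1 \<le> i \<Longrightarrow> i < length (tau n (x, y, z)) \<Longrightarrow>
    tau n (x, y, z) ! i = (1, 1, int n + tau_high (x, y, z) i)"
  unfolding Vn_def tau_def tau_high_def by (cases i) (auto simp: nth_append)

lemma valid_pattern_column_white:
  assumes V: "valid_pattern (Tn' n) w h P" and i: "i < w" and white: "fst (BOTTOM (P i 0)) = 1"
  shows "j < h \<Longrightarrow> fst (BOTTOM (P i j)) = 1"
proof (induction j)
  case (Suc j)
  then have "fst (TOP (P i j)) = 1"
    using Tn'_fst_TOP[OF valid_patternD(1)[OF V i, of j]] by simp
  then show ?case
    using valid_patternD(3)[OF V i Suc.prems] by simp
qed (simp add: white)

lemma valid_pattern_row_white: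
  assumes "valid_pattern (Tn' n) w h P" and "j < h" and "fst (LEFT (P 0 j)) = 1" and "i < w"
  shows "fst (LEFT (P i j)) = 1"
  using valid_pattern_column_white[OF valid_pattern_transpose[OF hat_in_Tn' assms(1)], of j i] assms
  by (simp add: pattern_transpose_def hat_def BOTTOM_def LEFT_def)

lemma valid_pattern_white_column_climbs:
  assumes V: "valid_pattern (Tn' n) w h P" and i: "i < w"
    and left_white: "\<And>j. 1 \<le> j \<Longrightarrow> j < h \<Longrightarrow> fst (LEFT (P i j)) = 1"
    and bottom_white: "\<And>j. 1 \<le> j \<Longrightarrow> j < h \<Longrightarrow> fst (BOTTOM (P i j)) = 1"
  shows "1 \<le> j \<Longrightarrow> j < h \<Longrightarrow> snd (snd (TOP (P i 0))) + int j - 1 \<le> int n"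
proof -
  note W = Tn'_white_tile_climbs[OF valid_patternD(1)[OF V i] left_white bottom_white]
  have climb: "snd (snd (BOTTOM (P i j))) = snd (snd (TOP (P i 0))) + int j - 1"
    if "1 \<le> j" "j < h" for j
    using that
  proof (induction j)
    case (Suc j)
    show ?case
    proof (cases "j = 0")
      case False
      then show ?thesis
        using Suc W[of j] valid_patternD(3)[OF V i, of j] by simp
    qed (use Suc valid_patternD(3)[OF V i, of 0] in simp)
  qed simp
  assume "1 \<le> j" "j < h"
  then show ?thesis
    using climb W by fastforce
qed

lemma Zn_pattern_forces_Mn:
  assumes n: "n \<ge> 1" and V: "valid_pattern (Tn' n) w h P"
    and B: "bottom_labels w P = tau n v" and L: "left_labels h P = tau n u"
    and u: "u \<in> Zn n" and v: "v \<in> Vn n"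
  shows "v \<in> Mn n"
proof (rule ccontr)
  assume "v \<notin> Mn n"
  obtain x y z where vxyz: "v = (x, y, z)" by (cases v)
  obtain yu zu where uyz: "u = (0, yu, zu)" and uV: "u \<in> Vn n"
    using u unfolding Zn_def by (cases u) auto
  have vV: "(x, y, z) \<in> Vn n" using v vxyz by simp
  have z: "z < int n" and x: "0 \<le> x" "x \<le> z"
    using \<open>v \<notin> Mn n\<close> vV vxyz unfolding Mn_def Vn_def by auto
  have w: "w = nat (int n + 1 - x)"
    using arg_cong[OF B, of length] length_tau[OF n vV] vxyz by simp
  have h: "h = n + 1"
    using arg_cong[OF L, of length] length_tau[OF n uV[unfolded uyz]] uyz by simp
  note PT = valid_patternD(1)[OF V]
  have bottom: "BOTTOM (P i 0) = tau n (x, y, z) ! i" if "i < w" for i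
    using arg_cong[OF B, of "\<lambda>l. l ! i"] that vxyz by simp
  have bottom_white: "fst (BOTTOM (P i 0)) = 1" if "1 \<le> i" "i < w" for i
    using bottom[of i] tau_nth[OF vV that(1)] length_tau[OF n vV] w that by simp
  have left_white: "fst (LEFT (P 0 j)) = 1" if "1 \<le> j" "j < h" for j
    using arg_cong[OF L, of "\<lambda>l. l ! j"] tau_nth[OF uV[unfolded uyz] that(1)]
      length_tau[OF n uV[unfolded uyz]] h uyz that by simp
  define i0 where "i0 = nat (int n - x)"
  have i0: "1 \<le> i0" "i0 < w"
    using w z x unfolding i0_def by auto
  have "snd (snd (BOTTOM (P (i0 - 1) 0))) = int n + 1"
  proof (cases "i0 = 1")
    case True
    then have "z = x" using z x unfolding i0_def by linarith
    then show ?thesis using bottom[of 0] tau_nth_0[OF vV] i0 True by (simp add: tau_high_def)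
  next
    case False
    then show ?thesis
      using bottom[of "i0 - 1"] tau_nth[OF vV, of "i0 - 1"] length_tau[OF n vV] w i0 z
      unfolding i0_def tau_high_def by auto
  qed
  moreover have "RIGHT (P (i0 - 1) 0) = LEFT (P i0 0)"
    using valid_patternD(2)[OF V, of "i0 - 1" 0] i0 h by simp
  ultimately have "fst (LEFT (P i0 0)) = 0 \<and> fst (snd (LEFT (P i0 0))) = 1"
    using Tn'_RIGHT_if_BOTTOM_level_Suc_n[OF PT, of "i0 - 1" 0] i0 h by simp
  then have "snd (snd (TOP (P i0 0))) = 2"
    using Tn'_TOP_level_2[OF PT] bottom_white i0 h by simp
  moreover have "snd (snd (TOP (P i0 0))) + int n - 1 \<le> int n"
    using valid_pattern_white_column_climbs[OF V \<open>i0 < w\<close>, of n] n h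
      valid_pattern_row_white[OF V _ left_white] valid_pattern_column_white[OF V _ bottom_white] i0
    by auto
  ultimately show False by simp
qed

definition tau_head_mid :: "label \<Rightarrow> int" where
  "tau_head_mid v = fst v - fst (snd v) + 1"

definition corner_tile :: "nat \<Rightarrow> label \<Rightarrow> label \<Rightarrow> tile" where
  "corner_tile n u v =
     ((0, tau_high v 0, tau_head_mid v), (0, tau_high u 0, tau_head_mid u),
      (0, tau_head_mid u, tau_high u 0 + int n), (0, tau_head_mid v, tau_high v 0 + int n))"

definition bottom_row_tile :: "nat \<Rightarrow> label \<Rightarrow> nat \<Rightarrow> tile" where
  "bottom_row_tile n v i =
     ((0, tau_high v i, tau_head_mid v + int i), (1, 1, 1 + tau_high v (i - 1)),
      (0, tau_high v (i - 1), tau_head_mid v + int i - 1), (1, 1, int n + tau_high v i))"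

definition inner_tile :: "label \<Rightarrow> label \<Rightarrow> nat \<Rightarrow> nat \<Rightarrow> tile" where
  "inner_tile u v i j =
     ((1, 1, tau_high u (j - 1) + int i + 1), (1, 1, tau_high v (i - 1) + int j + 1),
      (1, 1, tau_high u (j - 1) + int i), (1, 1, tau_high v (i - 1) + int j))"

definition canonical_pattern :: "nat \<Rightarrow> label \<Rightarrow> label \<Rightarrow> nat \<Rightarrow> nat \<Rightarrow> tile" where
  "canonical_pattern n u v i j =
     (if i = 0 \<and> j = 0 then corner_tile n u v
      else if j = 0 then bottom_row_tile n v i
      else if i = 0 then hat (bottom_row_tile n u j)
      else inner_tile u v i j)"

lemma corner_tile_in_Tn':
  assumes "(x, y, z) \<in> Vn n" and "(x', y', z') \<in> Vn n"
  shows "corner_tile n (x, y, z) (x', y', z') \<in> Tn' n"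
proof -
  have "corner_tile n (x, y, z) (x', y', z') \<in> Jn' n"
    unfolding Jn'_def corner_tile_def
    by (rule CollectI, rule exI[of _ "tau_high (x', y', z') 0"], rule exI[of _ "tau_head_mid (x', y', z')"],
        rule exI[of _ "tau_high (x, y, z) 0"], rule exI[of _ "tau_head_mid (x, y, z)"])
      (use assms in \<open>auto simp: Vn_def tau_high_def tau_head_mid_def\<close>)
  then show ?thesis unfolding Tn'_def by simp
qed

text \<open>The bottom row tile at column \<open>i\<close> is a \<open>B'\<close>, \<open>G\<close> or \<open>Y\<close> tile according to whether
  the step of \<open>\<tau>\<^sub>n(v)\<close> from \<open>n\<close> to \<open>n + 1\<close> lies after, at, or before \<open>i\<close>.\<close>

lemma bottom_row_tile_in_Tn':
  assumes "(x, y, z) \<in> Vn n" and "1 \<le> i" and "int i \<le> int n - x"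
  shows "bottom_row_tile n (x, y, z) i \<in> Tn' n"
proof -
  have xyz: "0 \<le> x" "x \<le> y" "y \<le> 1" "y \<le> z" "z \<le> int n + 1"
    using assms(1) unfolding Vn_def by auto
  let ?m = "x - y + int i"
  have m: "0 \<le> ?m" "?m \<le> int n" using xyz assms by auto
  consider "x + int i < z" | "x + int (i - 1) < z" "z \<le> x + int i" | "z \<le> x + int (i - 1)"
    by linarith
  then have "bottom_row_tile n (x, y, z) i \<in> Bn' n \<union> Gn n \<union> Yn n"
  proof cases
    case 1
    then have "bottom_row_tile n (x, y, z) i \<in> Bn' n"
      unfolding Bn'_def bottom_row_tile_def tau_high_def tau_head_mid_def
      using m by (intro CollectI exI[of _ ?m]) auto
    then show ?thesis by simp
  next
    case 2
    then have "bottom_row_tile n (x, y, z) i \<in> Gn n"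
      unfolding Gn_def bottom_row_tile_def tau_high_def tau_head_mid_def
      using m by (intro CollectI exI[of _ ?m]) auto
    then show ?thesis by simp
  next
    case 3
    then have "bottom_row_tile n (x, y, z) i \<in> Yn n"
      unfolding Yn_def bottom_row_tile_def tau_high_def tau_head_mid_def
      using m xyz assms by (intro CollectI exI[of _ ?m]) auto
    then show ?thesis by simp
  qed
  then show ?thesis unfolding Tn'_def by auto
qed

lemma inner_tile_in_Tn':
  assumes u: "(xu, yu, zu) \<in> Vn n" and v: "(x, y, z) \<in> Vn n"
    and cu: "xu = 0 \<Longrightarrow> z \<ge> int n" and cv: "x = 0 \<Longrightarrow> zu \<ge> int n"
    and i: "1 \<le> i" "int i \<le> int n - x" and j: "1 \<le> j" "int j \<le> int n - xu"
  shows "inner_tile (xu, yu, zu) (x, y, z) i j \<in> Tn' n"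
proof -
  let ?a = "tau_high (xu, yu, zu) (j - 1) + int i" and ?b = "tau_high (x, y, z) (i - 1) + int j"
  have "0 \<le> x" "x \<le> y" "y \<le> z" "0 \<le> xu" "xu \<le> yu" "yu \<le> zu"
    using u v unfolding Vn_def by auto
  then have "1 \<le> ?a \<and> ?a \<le> int n" "1 \<le> ?b \<and> ?b \<le> int n"
    using i j cu cv unfolding tau_high_def by (cases "x = 0"; cases "xu = 0"; auto)+
  then have "inner_tile (xu, yu, zu) (x, y, z) i j \<in> Wn n"
    unfolding Wn_def inner_tile_def by (intro CollectI exI[of _ ?a] exI[of _ ?b]) auto
  then show ?thesis unfolding Tn'_def by simp
qed

lemma canonical_pattern_in_Tn':
  assumes u: "(xu, yu, zu) \<in> Vn n" and v: "(x, y, z) \<in> Vn n"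
    and cu: "xu = 0 \<Longrightarrow> z \<ge> int n" and cv: "x = 0 \<Longrightarrow> zu \<ge> int n"
    and i: "int i \<le> int n - x" and j: "int j \<le> int n - xu"
  shows "canonical_pattern n (xu, yu, zu) (x, y, z) i j \<in> Tn' n"
  using corner_tile_in_Tn'[OF u v] bottom_row_tile_in_Tn'[OF v _ i]
    hat_in_Tn'[OF bottom_row_tile_in_Tn'[OF u _ j]] inner_tile_in_Tn'[OF u v cu cv _ i _ j]
  unfolding canonical_pattern_def by auto

lemma canonical_pattern_matches:
  shows "RIGHT (canonical_pattern n u v i j) = LEFT (canonical_pattern n u v (Suc i) j)"
    and "TOP (canonical_pattern n u v i j) = BOTTOM (canonical_pattern n u v i (Suc j))"
  unfolding canonical_pattern_def corner_tile_def bottom_row_tile_def inner_tile_def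
    hat_def RIGHT_def LEFT_def TOP_def BOTTOM_def
  by auto

lemma canonical_pattern_transpose:
  "pattern_transpose (canonical_pattern n v u) = canonical_pattern n u v"
  unfolding pattern_transpose_def canonical_pattern_def corner_tile_def inner_tile_def
  by (intro ext) (auto simp: hat_def RIGHT_def LEFT_def TOP_def BOTTOM_def)

lemma bottom_labels_canonical_pattern:
  assumes n: "n \<ge> 1" and v: "(x, y, z) \<in> Vn n"
  shows "bottom_labels (nat (int n + 1 - x)) (canonical_pattern n u (x, y, z)) = tau n (x, y, z)"
proof (rule nth_equalityI)
  show "length (bottom_labels (nat (int n + 1 - x)) (canonical_pattern n u (x, y, z))) =
      length (tau n (x, y, z))"
    using length_tau[OF n v] by simp
  fix i assume "i < length (bottom_labels (nat (int n + 1 - x)) (canonical_pattern n u (x, y, z)))"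
  then show "bottom_labels (nat (int n + 1 - x)) (canonical_pattern n u (x, y, z)) ! i = tau n (x, y, z) ! i"
    using tau_nth_0[OF v] tau_nth[OF v, of i] length_tau[OF n v]
    by (cases "i = 0")
      (auto simp: canonical_pattern_def corner_tile_def bottom_row_tile_def BOTTOM_def tau_head_mid_def)
qed

lemma canonical_pattern_tiles:
  assumes n: "n \<ge> 1" and u: "(xu, yu, zu) \<in> Vn n" and v: "(x, y, z) \<in> Vn n"
    and cu: "xu = 0 \<Longrightarrow> z \<ge> int n" and cv: "x = 0 \<Longrightarrow> zu \<ge> int n"
  defines "w \<equiv> nat (int n + 1 - x)" and "h \<equiv> nat (int n + 1 - xu)"
  shows "valid_pattern (Tn' n) w h (canonical_pattern n (xu, yu, zu) (x, y, z))"
    and "bottom_labels w (canonical_pattern n (xu, yu, zu) (x, y, z)) = tau n (x, y, z)"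
    and "left_labels h (canonical_pattern n (xu, yu, zu) (x, y, z)) = tau n (xu, yu, zu)"
proof -
  have "0 \<le> x" "0 \<le> xu" using u v unfolding Vn_def by auto
  then have "i < w \<Longrightarrow> j < h \<Longrightarrow> canonical_pattern n (xu, yu, zu) (x, y, z) i j \<in> Tn' n" for i j
    unfolding w_def h_def by (intro canonical_pattern_in_Tn'[OF u v cu cv]) auto
  then show "valid_pattern (Tn' n) w h (canonical_pattern n (xu, yu, zu) (x, y, z))"
    unfolding valid_pattern_def by (simp add: canonical_pattern_matches)
  show "bottom_labels w (canonical_pattern n (xu, yu, zu) (x, y, z)) = tau n (x, y, z)"
    unfolding w_def by (rule bottom_labels_canonical_pattern[OF n v])
  show "left_labels h (canonical_pattern n (xu, yu, zu) (x, y, z)) = tau n (xu, yu, zu)"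
    using bottom_labels_canonical_pattern[OF n u, of "(x, y, z)"]
    unfolding h_def left_labels_transpose[symmetric] canonical_pattern_transpose .
qed

lemma tileable_condition_iff:
  assumes "u \<in> Vn n" and "v \<in> Vn n"
  shows "(u, v) \<in> ((Vn n - Zn n) \<times> (Vn n - Zn n)) \<union> ((Mn n \<inter> Zn n) \<times> (Mn n \<inter> Zn n))
                      \<union> ((Mn n - Zn n) \<times> Zn n) \<union> (Zn n \<times> (Mn n - Zn n))
    \<longleftrightarrow> (u \<in> Zn n \<longrightarrow> v \<in> Mn n) \<and> (v \<in> Zn n \<longrightarrow> u \<in> Mn n)"
  using assms unfolding Zn_def Mn_def by blast

theorem proposition5p8:
  fixes n :: nat and u v :: label
  assumes "n \<ge> 1" and "u \<in> Vn n" and "v \<in> Vn n"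
  shows "(\<exists>w h P. valid_pattern (Tn' n) w h P \<and>
                  bottom_labels w P = tau n v \<and> left_labels h P = tau n u)
         \<longleftrightarrow> (u, v) \<in> ((Vn n - Zn n) \<times> (Vn n - Zn n)) \<union> ((Mn n \<inter> Zn n) \<times> (Mn n \<inter> Zn n))
                      \<union> ((Mn n - Zn n) \<times> Zn n) \<union> (Zn n \<times> (Mn n - Zn n))"
  (is "?tileable \<longleftrightarrow> _")
  unfolding tileable_condition_iff[OF assms(2,3)]
proof
  assume ?tileable
  with pattern_exists_transpose[OF this] show "(u \<in> Zn n \<longrightarrow> v \<in> Mn n) \<and> (v \<in> Zn n \<longrightarrow> u \<in> Mn n)"
    using Zn_pattern_forces_Mn[OF assms(1)] assms(2,3) by blast
next
  assume cond: "(u \<in> Zn n \<longrightarrow> v \<in> Mn n) \<and> (v \<in> Zn n \<longrightarrow> u \<in> Mn n)"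
  obtain xu yu zu x y z where u: "u = (xu, yu, zu)" and v: "v = (x, y, z)"
    by (cases u, cases v)
  have "xu = 0 \<Longrightarrow> z \<ge> int n" and "x = 0 \<Longrightarrow> zu \<ge> int n"
    using cond assms(2,3) unfolding u v Zn_def Mn_def by auto
  then show ?tileable
    using canonical_pattern_tiles[OF assms(1) assms(2,3)[unfolded u v]] unfolding u v by blast
qed

end
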